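(* Let $(V,\nu)$ and $(W,\mu)$ be strongly complete PN-spaces and let $T:V\to W$ be a linear operator that is continuous with respect to the strong topologies, i.e. $T\in B(V,W)$. If $T$ is surjective, then $T$ is an open mapping: for every strongly open set $U\subseteq V$, the set $T(U)$ is strongly open in $W$.
   Context: A distance distribution function is a map $F:[-\infty,+\infty]\to[0,1]$ that is nondecreasing, left-continuous on $\mathbb{R}$, with $F(-\infty)=0$, $F(+\infty)=1$ and $F(0)=0$; the set of these is $\Delta^+$. $\mathcal{D}^+\subseteq\Delta^+$ denotes the proper ones, i.e. those with $\lim_{x\to+\infty}F(x)=1$. $H_0\in\Delta^+$ is $H_0(x)=0$ for $x\le 0$ and $H_0(x)=1$ for $x>0$. For $F,G\in\Delta^+$ let $\tau_M(F,G)(x)=\sup\{\min(F(s),G(t)) : s+t=x\}$. In this paper a PN-space $(V,\nu)$ is a real vector space $V$ with a map $\nu:V\to\Delta^+$, $p\mapsto\nu_p$, such that for all $p,q\in V$: $\nu_p=H_0$ iff $p=0$; $\nu_{p+q}\ge\tau_M(\nu_p,\nu_q)$ pointwise; and $\nu_{\alpha p}(x)=\nu_p(x/|\alpha|)$ for all real $\alpha\neq0$ and $x\ge 0$. Standing assumption: $\nu_p\in\mathcal{D}^+$ for every $p\in V$. For $x\in V$ and $w\in(0,1)$ put $\|x\|_w=\sup\{t\in\mathbb{R}:\nu_x(t)<w\}$; for each $w$ this is a norm on $V$, and $w\mapsto\|x\|_w$ is nondecreasing. For $p\in V$, $r>0$, $w\in(0,1)$ put $B_w(p;r)=\{x\in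 V:\|x-p\|_w<r\}$. The strong topology on $V$ is generated by the neighbourhoods $N_p(t)=\{q\in V:\nu_{p-q}(t)>1-t\}$, $p\in V$, $t>0$; equivalently the family $\{B_w(p;r)\}$ is a basis for it. A sequence $(p_n)$ converges strongly to $p$ if for every $t>0$ one has $p_n\in N_p(t)$ for all large $n$; it is strongly Cauchy if for every $t>0$ there is $N$ with $\nu_{p_n-p_m}(t)>1-t$ for all $m,n>N$. $(V,\nu)$ is strongly complete if every strongly Cauchy sequence converges strongly. $B(V,W)$ denotes the set of linear operators $V\to W$ that are continuous for the strong topologies (equivalently, map bounded sets to bounded sets). *)

theory Defs
  imports "HOL-Analysis.Analysis"
begin

definition dist_distr :: "(ereal \<Rightarrow> real) \<Rightarrow> bool" where
  "dist_distr F \<longleftrightarrow>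
     (\<forall>x. 0 \<le> F x \<and> F x \<le> 1) \<and>
     mono F \<and>
     (\<forall>x::real. ((\<lambda>y. F (ereal y)) \<longlongrightarrow> F (ereal x)) (at_left x)) \<and>
     F (-\<infinity>) = 0 \<and> F \<infinity> = 1 \<and> F 0 = 0"

definition proper_dist_distr :: "(ereal \<Rightarrow> real) \<Rightarrow> bool" where
  "proper_dist_distr F \<longleftrightarrow> dist_distr F \<and> ((\<lambda>x. F (ereal x)) \<longlongrightarrow> 1) at_top"

definition H0 :: "ereal \<Rightarrow> real" where
  "H0 x = (if x \<le> 0 then 0 else 1)"

definition tauM :: "(ereal \<Rightarrow> real) \<Rightarrow> (ereal \<Rightarrow> real) \<Rightarrow> real \<Rightarrow> real" where
  "tauM F G x = Sup {min (F (ereal s)) (G (ereal t)) | s t. s + t = x}"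

text \<open>PN-space (with the standing assumption that every nu_p is proper).\<close>
definition PN_space :: "('a::real_vector \<Rightarrow> ereal \<Rightarrow> real) \<Rightarrow> bool" where
  "PN_space \<nu> \<longleftrightarrow>
     (\<forall>p. proper_dist_distr (\<nu> p)) \<and>
     (\<forall>p. \<nu> p = H0 \<longleftrightarrow> p = 0) \<and>
     (\<forall>p q. \<forall>x::real. \<nu> (p + q) (ereal x) \<ge> tauM (\<nu> p) (\<nu> q) x) \<and>
     (\<forall>p \<alpha> x. \<alpha> \<noteq> 0 \<and> x \<ge> (0::real) \<longrightarrow> \<nu> (\<alpha> *\<^sub>R p) (ereal x) = \<nu> p (ereal (x / \<bar>\<alpha>\<bar>)))"

definition strong_nbhd :: "('a::real_vector \<Rightarrow> ereal \<Rightarrow> real) \<Rightarrow> 'a \<Rightarrow> real \<Rightarrow> 'a set" where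
  "strong_nbhd \<nu> p t = {q. \<nu> (p - q) (ereal t) > 1 - t}"

definition strong_open :: "('a::real_vector \<Rightarrow> ereal \<Rightarrow> real) \<Rightarrow> 'a set \<Rightarrow> bool" where
  "strong_open \<nu> U \<longleftrightarrow> (\<forall>p\<in>U. \<exists>t>0. strong_nbhd \<nu> p t \<subseteq> U)"

definition strong_converges :: "('a::real_vector \<Rightarrow> ereal \<Rightarrow> real) \<Rightarrow> (nat \<Rightarrow> 'a) \<Rightarrow> 'a \<Rightarrow> bool" where
  "strong_converges \<nu> s p \<longleftrightarrow> (\<forall>t>0. \<exists>N. \<forall>n\<ge>N. s n \<in> strong_nbhd \<nu> p t)"

definition strong_Cauchy :: "('a::real_vector \<Rightarrow> ereal \<Rightarrow> real) \<Rightarrow> (nat \<Rightarrow> 'a) \<Rightarrow> bool" where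
  "strong_Cauchy \<nu> s \<longleftrightarrow> (\<forall>t>0. \<exists>N. \<forall>m>N. \<forall>n>N. \<nu> (s n - s m) (ereal t) > 1 - t)"

definition strongly_complete :: "('a::real_vector \<Rightarrow> ereal \<Rightarrow> real) \<Rightarrow> bool" where
  "strongly_complete \<nu> \<longleftrightarrow> (\<forall>s. strong_Cauchy \<nu> s \<longrightarrow> (\<exists>p. strong_converges \<nu> s p))"

definition strongly_continuous ::
  "('a::real_vector \<Rightarrow> ereal \<Rightarrow> real) \<Rightarrow> ('b::real_vector \<Rightarrow> ereal \<Rightarrow> real) \<Rightarrow> ('a \<Rightarrow> 'b) \<Rightarrow> bool" where
  "strongly_continuous \<nu> \<mu> T \<longleftrightarrow> (\<forall>U. strong_open \<mu> U \<longrightarrow> strong_open \<nu> (T -` U))"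

end

theory Submission
  imports Defs
begin

text \<open>The quantity \<open>pn_norm \<nu> x = inf {t > 0. \<nu>\<^sub>x(t) > 1 - t}\<close> is an F-norm whose
metric \<open>pn_norm \<nu> (x - y)\<close> induces the strong topology, and strong completeness is
completeness of this metric. The Banach-space proof of the open mapping theorem needs only
F-norm properties: by Baire category the closure of the image of some dilated ball has interior,
symmetrisation moves that interior to the origin, and successive approximation with geometrically
shrinking radii, summed in the complete domain, shows that the image of every ball around 0
contains a ball around 0.\<close>

section \<open>F-norms\<close>

text \<open>Instead of homogeneity an F-norm only satisfies monotonicity under scalars of modulus
at most 1 and the absorbing property \<open>x /\<^sub>R n \<rightarrow> 0\<close>; this is all the open mapping argument uses.\<close>

locale F_norm =
  fixes N :: "'a::real_vector \<Rightarrow> real"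
  assumes ge_zero: "0 \<le> N x"
    and eq_0_iff: "N x = 0 \<longleftrightarrow> x = 0"
    and triangle_ineq: "N (x + y) \<le> N x + N y"
    and scaleR_le: "\<bar>c\<bar> \<le> 1 \<Longrightarrow> N (c *\<^sub>R x) \<le> N x"
    and absorbing: "0 < r \<Longrightarrow> \<exists>n. N (x /\<^sub>R real (Suc n)) < r"
begin

lemma at_zero [simp]: "N 0 = 0"
  using eq_0_iff by simp

lemma minus [simp]: "N (- x) = N x"
proof -
  have "N ((-1) *\<^sub>R x) \<le> N x" "N ((-1) *\<^sub>R ((-1) *\<^sub>R x)) \<le> N ((-1) *\<^sub>R x)"
    by (rule scaleR_le; simp)+
  then show ?thesis by simp
qed

lemma minus_commute: "N (x - y) = N (y - x)"
  using minus[of "x - y"] by simp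

lemma diff_triangle: "N (x - z) \<le> N (x - y) + N (y - z)"
  using triangle_ineq[of "x - y" "y - z"] by simp

lemma scaleR_of_nat_le: "N (real k *\<^sub>R x) \<le> real k * N x"
proof (induction k)
  case (Suc k)
  have "N (real (Suc k) *\<^sub>R x) \<le> N x + N (real k *\<^sub>R x)"
    using triangle_ineq[of x "real k *\<^sub>R x"] by (simp add: algebra_simps)
  with Suc show ?case by (simp add: algebra_simps)
qed simp

sublocale Metric_space UNIV "\<lambda>x y. N (x - y)"
  by unfold_locales (auto simp: ge_zero eq_0_iff minus_commute diff_triangle)

lemma Baire_somewhere_dense:
  fixes A :: "nat \<Rightarrow> 'a set"
  assumes "mcomplete" and "(\<Union>n. A n) = UNIV"
  shows "\<exists>n y \<epsilon>. 0 < \<epsilon> \<and> mball y \<epsilon> \<subseteq> mtopology closure_of A n"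
proof (rule ccontr)
  assume no_ball: "\<not> ?thesis"
  have "mtopology interior_of (mtopology closure_of A n) = {}" for n
  proof (rule ccontr)
    assume "mtopology interior_of (mtopology closure_of A n) \<noteq> {}"
    then obtain y \<epsilon> where "0 < \<epsilon>" "mball y \<epsilon> \<subseteq> mtopology interior_of (mtopology closure_of A n)"
      using openin_interior_of[of mtopology] unfolding openin_mtopology by blast
    with no_ball show False
      by (meson interior_of_subset order_trans)
  qed
  then have "mtopology interior_of (\<Union>n. mtopology closure_of A n) = {}"
    by (intro metric_Baire_category_alt \<open>mcomplete\<close>) auto
  moreover have "(\<Union>n. A n) \<subseteq> (\<Union>n. mtopology closure_of A n)"
    by (intro UN_mono closure_of_subset) auto
  then have "(\<Union>n. mtopology closure_of A n) = UNIV"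
    using assms(2) by auto
  ultimately show False
    using interior_of_topspace[of mtopology] by simp
qed

lemma geometric_increments_diff_le:
  assumes "\<And>k. N (s (Suc k) - s k) \<le> c * (1/2) ^ k" and "m \<le> n"
  shows "N (s n - s m) \<le> 2 * c * ((1/2) ^ m - (1/2) ^ n)"
  using \<open>m \<le> n\<close>
proof (induction n rule: dec_induct)
  case (step n)
  have "N (s (Suc n) - s m) \<le> N (s (Suc n) - s n) + N (s n - s m)"
    by (rule diff_triangle)
  with assms(1)[of n] step.IH show ?case by (simp add: algebra_simps)
qed simp

lemma geometric_increments_converge:
  assumes "mcomplete" and "\<And>k. N (s (Suc k) - s k) \<le> c * (1/2) ^ k"
  shows "\<exists>p. (\<lambda>n. N (s n - p)) \<longlonglongrightarrow> 0"
proof -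
  have "0 \<le> N (s 1 - s 0)" "N (s 1 - s 0) \<le> c"
    using ge_zero assms(2)[of 0] by simp_all
  then have c: "0 \<le> c" by linarith
  have bound: "N (s n - s m) \<le> 2 * c * (1/2) ^ min m n" for m n
  proof -
    have "0 \<le> 2 * c * (1/2::real) ^ max m n"
      using c by simp
    with geometric_increments_diff_le[OF assms(2), of "min m n" "max m n"] show ?thesis
      by (cases "m \<le> n") (auto simp: minus_commute[of "s m"] min_def max_def right_diff_distrib)
  qed
  have "MCauchy s"
    unfolding MCauchy_def
  proof (intro conjI allI impI)
    fix e :: real assume "0 < e"
    have "(\<lambda>K. 2 * c * (1/2::real) ^ K) \<longlonglongrightarrow> 0"
      by (intro tendsto_mult_right_zero LIMSEQ_realpow_zero) simp_all
    then obtain K where K: "2 * c * (1/2) ^ K < e"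
      using \<open>0 < e\<close> by (meson LIMSEQ_le_const not_le)
    have "N (s n - s n') < e" if "K \<le> n" "K \<le> n'" for n n'
    proof -
      have "2 * c * (1/2) ^ min n' n \<le> 2 * c * (1/2::real) ^ K"
        using that c by (intro mult_left_mono power_decreasing) auto
      with bound[of n n'] K show ?thesis by linarith
    qed
    then show "\<exists>K. \<forall>n n'. K \<le> n \<longrightarrow> K \<le> n' \<longrightarrow> N (s n - s n') < e"
      by blast
  qed simp
  then obtain p where "limitin mtopology s p sequentially"
    using \<open>mcomplete\<close> unfolding mcomplete_def by blast
  then show ?thesis
    by (auto simp: limitin_metric_dist_null)
qed

end

section \<open>The open mapping theorem for F-normed spaces\<close>

text \<open>\<open>s k\<close> is the sum of the first \<open>k\<close> corrections and \<open>w - T (s k)\<close> the remaining error.\<close>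

lemma successive_approximation:
  assumes "linear T"
    and step: "\<And>k w. P k w \<Longrightarrow> \<exists>x. Q k x \<and> P (Suc k) (w - T x)"
    and "P 0 w"
  shows "\<exists>s. s 0 = 0 \<and> (\<forall>k. Q k (s (Suc k) - s k) \<and> P k (w - T (s k)))"
proof -
  have "\<exists>s. \<forall>k. (P k (w - T (s k)) \<and> (k = 0 \<longrightarrow> s k = 0)) \<and> Q k (s (Suc k) - s k)"
  proof (rule dependent_nat_choice[of "\<lambda>k s. P k (w - T s) \<and> (k = 0 \<longrightarrow> s = 0)"
        "\<lambda>k s s'. Q k (s' - s)"])
    show "\<exists>s. P 0 (w - T s) \<and> (0 = 0 \<longrightarrow> s = 0)"
      using \<open>P 0 w\<close> linear_0[OF \<open>linear T\<close>] by auto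
    fix s k assume "P k (w - T s) \<and> (k = 0 \<longrightarrow> s = 0)"
    then obtain x where "Q k x" "P (Suc k) (w - T s - T x)"
      using step by blast
    then show "\<exists>s'. (P (Suc k) (w - T s') \<and> (Suc k = 0 \<longrightarrow> s' = 0)) \<and> Q k (s' - s)"
      by (intro exI[of _ "s + x"]) (simp add: linear_add[OF \<open>linear T\<close>] algebra_simps)
  qed
  then show ?thesis by blast
qed

locale linear_F_norm_map = V: F_norm N + W: F_norm M
  for N :: "'a::real_vector \<Rightarrow> real" and M :: "'b::real_vector \<Rightarrow> real" +
  fixes T :: "'a \<Rightarrow> 'b"
  assumes linear: "linear T"
begin

lemma image_scaled_balls_cover:
  assumes "surj T" and "0 < r"
  shows "(\<Union>n. (\<lambda>x. T (real (Suc n) *\<^sub>R x)) ` {x. N x < r}) = UNIV"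
proof -
  have "w \<in> (\<Union>n. (\<lambda>x. T (real (Suc n) *\<^sub>R x)) ` {x. N x < r})" for w
  proof -
    obtain x where x: "w = T x"
      using \<open>surj T\<close> by (metis surjD)
    obtain n where "N (x /\<^sub>R real (Suc n)) < r"
      using V.absorbing[OF \<open>0 < r\<close>] by blast
    then have "w \<in> (\<lambda>x. T (real (Suc n) *\<^sub>R x)) ` {x. N x < r}"
      unfolding x by (intro image_eqI[of _ _ "x /\<^sub>R real (Suc n)"]) auto
    then show ?thesis
      by blast
  qed
  then show ?thesis
    by blast
qed

lemma image_ball_somewhere_dense:
  assumes "W.mcomplete" and "surj T" and "0 < r"
  shows "\<exists>y \<eta>. 0 < \<eta> \<and> (\<forall>z. M (y - z) < \<eta> \<longrightarrow> (\<forall>\<delta>>0. \<exists>x. N x < r \<and> M (z - T x) < \<delta>))"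
proof -
  define A where "A n = (\<lambda>x. T (real (Suc n) *\<^sub>R x)) ` {x. N x < r}" for n
  have "(\<Union>n. A n) = UNIV"
    unfolding A_def by (rule image_scaled_balls_cover[OF assms(2,3)])
  then obtain n y \<epsilon> where "0 < \<epsilon>" and ball: "W.mball y \<epsilon> \<subseteq> W.mtopology closure_of A n"
    using W.Baire_somewhere_dense[OF \<open>W.mcomplete\<close>] by blast
  define m where "m = real (Suc n)"
  have m: "1 \<le> m"
    unfolding m_def by simp
  show ?thesis
  proof (intro exI[of _ "y /\<^sub>R m"] exI[of _ "\<epsilon> / m"] conjI allI impI)
    show "0 < \<epsilon> / m"
      using \<open>0 < \<epsilon>\<close> m by simp
    fix z and \<delta> :: real
    assume z: "M (y /\<^sub>R m - z) < \<epsilon> / m" and "0 < \<delta>"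
    have "M (y - m *\<^sub>R z) \<le> m * M (y /\<^sub>R m - z)"
      using W.scaleR_of_nat_le[of "Suc n" "y /\<^sub>R m - z"] m
      by (simp add: m_def scaleR_diff_right)
    also have "\<dots> < \<epsilon>"
      using z m by (simp add: field_simps)
    finally have "m *\<^sub>R z \<in> W.mtopology closure_of A n"
      using ball by auto
    then obtain a where "a \<in> A n" and a: "M (m *\<^sub>R z - a) < \<delta>"
      using \<open>0 < \<delta>\<close> unfolding W.metric_closure_of by auto
    then obtain x where x: "N x < r" "a = m *\<^sub>R T x"
      unfolding A_def m_def by (auto simp: linear_scale[OF linear])
    have "M (z - T x) = M ((m *\<^sub>R z - a) /\<^sub>R m)"
      using m by (simp add: x scaleR_diff_right)
    also have "\<dots> \<le> M (m *\<^sub>R z - a)"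
      using m by (intro W.scaleR_le) (simp add: inverse_le_1_iff)
    finally show "\<exists>x. N x < r \<and> M (z - T x) < \<delta>"
      using x a by auto
  qed
qed

lemma image_ball_dense_near_zero:
  assumes dense: "\<forall>z. M (y - z) < \<eta> \<longrightarrow> (\<forall>\<delta>>0. \<exists>x. N x < r \<and> M (z - T x) < \<delta>)"
    and "0 < \<eta>" and "M w < \<eta>" and "0 < \<delta>"
  shows "\<exists>x. N x < 2 * r \<and> M (w - T x) < \<delta>"
proof -
  have "M (y - (y + w)) < \<eta>" "M (y - y) < \<eta>"
    using assms by simp_all
  then obtain x1 x2 where x1: "N x1 < r" "M (y + w - T x1) < \<delta> / 2"
    and x2: "N x2 < r" "M (y - T x2) < \<delta> / 2"
    using dense \<open>0 < \<delta>\<close> by (meson half_gt_zero)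
  have "N (x1 - x2) \<le> N x1 + N x2"
    using V.triangle_ineq[of x1 "- x2"] by simp
  moreover have "w - T (x1 - x2) = (y + w - T x1) + - (y - T x2)"
    by (simp add: linear_diff[OF linear] algebra_simps)
  then have "M (w - T (x1 - x2)) \<le> M (y + w - T x1) + M (y - T x2)"
    using W.triangle_ineq[of "y + w - T x1" "- (y - T x2)"] by (simp only: W.minus)
  ultimately show ?thesis
    using x1 x2 by (intro exI[of _ "x1 - x2"]) simp
qed

lemma almost_open:
  assumes "W.mcomplete" and "surj T" and "0 < r"
  shows "\<exists>\<eta>>0. \<forall>w. M w < \<eta> \<longrightarrow> (\<forall>\<delta>>0. \<exists>x. N x < r \<and> M (w - T x) < \<delta>)"
proof -
  obtain y \<eta> where "0 < \<eta>"
    and "\<forall>z. M (y - z) < \<eta> \<longrightarrow> (\<forall>\<delta>>0. \<exists>x. N x < r / 2 \<and> M (z - T x) < \<delta>)"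
    using image_ball_somewhere_dense[OF assms(1,2), of "r / 2"] \<open>0 < r\<close> by auto
  then show ?thesis
    using image_ball_dense_near_zero[of y \<eta> "r / 2"] by auto
qed

lemma tendsto_zero_image:
  assumes cont: "\<forall>e>0. \<exists>d>0. \<forall>x. N x < d \<longrightarrow> M (T x) < e"
    and "(\<lambda>n. N (x n)) \<longlonglongrightarrow> 0"
  shows "(\<lambda>n. M (T (x n))) \<longlonglongrightarrow> 0"
proof (rule order_tendstoI)
  fix e :: real assume "0 < e"
  with cont obtain d where "0 < d" and d: "\<And>x. N x < d \<Longrightarrow> M (T x) < e"
    by blast
  show "\<forall>\<^sub>F n in sequentially. M (T (x n)) < e"
    using order_tendstoD(2)[OF assms(2) \<open>0 < d\<close>] by (rule eventually_mono) (rule d)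
qed (auto intro!: always_eventually intro: order_less_le_trans[OF _ W.ge_zero])

lemma image_limit_eq:
  assumes cont: "\<forall>e>0. \<exists>d>0. \<forall>x. N x < d \<longrightarrow> M (T x) < e"
    and "(\<lambda>n. N (s n - p)) \<longlonglongrightarrow> 0" and "(\<lambda>n. M (w - T (s n))) \<longlonglongrightarrow> 0"
  shows "T p = w"
proof -
  have "(\<lambda>n. M (T (s n - p))) \<longlonglongrightarrow> 0"
    by (rule tendsto_zero_image[OF cont assms(2)])
  with assms(3) have "(\<lambda>n. M (w - T (s n)) + M (T (s n - p))) \<longlonglongrightarrow> 0"
    using tendsto_add_zero by blast
  moreover have "M (w - T p) \<le> M (w - T (s n)) + M (T (s n - p))" for n
    using W.diff_triangle[of w "T p" "T (s n)"] by (simp add: linear_diff[OF linear])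
  ultimately have "M (w - T p) \<le> 0"
    by (intro tendsto_lowerbound) auto
  then show ?thesis
    using W.ge_zero[of "w - T p"] W.eq_0_iff[of "w - T p"] by simp
qed

lemma solution_from_geometric_approximations:
  assumes "V.mcomplete"
    and cont: "\<forall>e>0. \<exists>d>0. \<forall>x. N x < d \<longrightarrow> M (T x) < e"
    and "0 < R" and "s 0 = 0"
    and incr: "\<And>k. N (s (Suc k) - s k) \<le> R / 4 * (1/2) ^ k"
    and residual: "\<And>k. M (w - T (s k)) \<le> R / 4 * (1/2) ^ k"
  shows "\<exists>x. N x < R \<and> T x = w"
proof -
  obtain p where p: "(\<lambda>n. N (s n - p)) \<longlonglongrightarrow> 0"
    using V.geometric_increments_converge[OF assms(1) incr] by blast
  obtain n where n: "N (s n - p) < R / 2"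
    using order_tendstoD(2)[OF p, of "R / 2"] \<open>0 < R\<close> by (auto dest: eventually_happens)
  have "N (s n - s 0) \<le> 2 * (R / 4) * ((1/2) ^ 0 - (1/2) ^ n)"
    by (rule V.geometric_increments_diff_le[OF incr]) simp
  also have "\<dots> \<le> R / 2"
    using \<open>0 < R\<close> by (simp add: right_diff_distrib)
  finally have "N (s n) \<le> R / 2"
    by (simp add: \<open>s 0 = 0\<close>)
  moreover have "N p \<le> N (p - s n) + N (s n)"
    using V.diff_triangle[of p 0 "s n"] by simp
  ultimately have "N p < R"
    using n V.minus_commute[of p "s n"] by linarith
  have "\<forall>k. norm (M (w - T (s k))) \<le> R / 4 * (1/2) ^ k"
    using residual by (simp add: W.ge_zero)
  moreover have "(\<lambda>k. R / 4 * (1/2::real) ^ k) \<longlonglongrightarrow> 0"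
    by (intro tendsto_mult_right_zero LIMSEQ_realpow_zero) simp_all
  ultimately have "(\<lambda>k. M (w - T (s k))) \<longlonglongrightarrow> 0"
    by (rule Lim_null_comparison[OF always_eventually])
  with p have "T p = w"
    by (rule image_limit_eq[OF cont])
  with \<open>N p < R\<close> show ?thesis
    by blast
qed

lemma image_ball_contains_ball:
  assumes "V.mcomplete" and "W.mcomplete" and "surj T"
    and cont: "\<forall>e>0. \<exists>d>0. \<forall>x. N x < d \<longrightarrow> M (T x) < e"
    and "0 < R"
  shows "\<exists>\<eta>>0. \<forall>w. M w < \<eta> \<longrightarrow> (\<exists>x. N x < R \<and> T x = w)"
proof -
  \<comment> \<open>the corrections then add up to at most \<open>R / 2\<close>\<close>
  define r where "r k = R / 4 * (1/2) ^ k" for k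
  have r: "0 < r k" for k
    unfolding r_def using \<open>0 < R\<close> by simp
  have "\<forall>k. \<exists>\<eta>>0. \<forall>w. M w < \<eta> \<longrightarrow> (\<forall>\<delta>>0. \<exists>x. N x < r k \<and> M (w - T x) < \<delta>)"
    using almost_open[OF assms(2,3) r] by blast
  then have "\<exists>\<eta>'. \<forall>k. 0 < \<eta>' k \<and>
      (\<forall>w. M w < \<eta>' k \<longrightarrow> (\<forall>\<delta>>0. \<exists>x. N x < r k \<and> M (w - T x) < \<delta>))"
    by (rule choice)
  then obtain \<eta>' where \<eta>': "\<And>k. 0 < \<eta>' k"
    and approx: "\<And>k w \<delta>. M w < \<eta>' k \<Longrightarrow> 0 < \<delta> \<Longrightarrow> \<exists>x. N x < r k \<and> M (w - T x) < \<delta>"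
    by blast
  \<comment> \<open>capping by \<open>r k\<close> forces the errors to 0\<close>
  define \<eta> where "\<eta> k = min (\<eta>' k) (r k)" for k
  have \<eta>: "0 < \<eta> k" for k
    unfolding \<eta>_def using \<eta>' r by simp
  have step: "\<exists>x. N x < r k \<and> M (w - T x) < \<eta> (Suc k)" if "M w < \<eta> k" for k w
    using approx[of w k "\<eta> (Suc k)"] that \<eta> unfolding \<eta>_def by simp
  have "\<exists>x. N x < R \<and> T x = w" if "M w < \<eta> 0" for w
  proof -
    obtain s where "s 0 = 0" and s: "\<And>k. N (s (Suc k) - s k) < r k" "\<And>k. M (w - T (s k)) < \<eta> k"
      using successive_approximation[OF linear step \<open>M w < \<eta> 0\<close>] by blast
    show ?thesis
      using s unfolding \<eta>_def r_def
      by (intro solution_from_geometric_approximations[where s = s, OF assms(1) cont \<open>0 < R\<close> \<open>s 0 = 0\<close>])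
        (auto intro: less_imp_le)
  qed
  then show ?thesis
    using \<eta> by blast
qed

lemma open_mapping:
  assumes "V.mcomplete" and "W.mcomplete" and "surj T"
    and cont: "\<forall>e>0. \<exists>d>0. \<forall>x. N x < d \<longrightarrow> M (T x) < e"
    and "openin V.mtopology U"
  shows "openin W.mtopology (T ` U)"
  unfolding W.openin_mtopology
proof (intro conjI allI impI)
  fix w assume "w \<in> T ` U"
  then obtain p where "p \<in> U" and w: "w = T p"
    by blast
  then obtain R where "0 < R" and R: "V.mball p R \<subseteq> U"
    using \<open>openin V.mtopology U\<close> unfolding V.openin_mtopology by blast
  then obtain \<eta> where "0 < \<eta>" and \<eta>: "\<And>v. M v < \<eta> \<Longrightarrow> \<exists>x. N x < R \<and> T x = v"
    using image_ball_contains_ball[OF assms(1-3) cont] by blast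
  have "z \<in> T ` U" if "z \<in> W.mball w \<eta>" for z
  proof -
    obtain x where "N x < R" and x: "T x = w - z"
      using \<eta> \<open>z \<in> W.mball w \<eta>\<close> by auto
    then have "p - x \<in> U"
      using R by auto
    moreover have "z = T (p - x)"
      by (simp add: w x linear_diff[OF linear])
    ultimately show ?thesis
      by blast
  qed
  with \<open>0 < \<eta>\<close> show "\<exists>\<eta>>0. W.mball w \<eta> \<subseteq> T ` U"
    by blast
qed simp

end

section \<open>The F-norm of a PN space\<close>

text \<open>The analogue of the Ky Fan metric of convergence in probability.\<close>

definition pn_norm :: "('a::real_vector \<Rightarrow> ereal \<Rightarrow> real) \<Rightarrow> 'a \<Rightarrow> real" where
  "pn_norm \<nu> x = Inf {t. 0 < t \<and> 1 - t < \<nu> x (ereal t)}"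

lemma pn_norm_le:
  assumes "0 < t" and "1 - t < \<nu> x (ereal t)"
  shows "pn_norm \<nu> x \<le> t"
  unfolding pn_norm_def using assms by (intro cInf_lower bdd_belowI[where m = 0]) auto

lemma strong_nbhd_imp_pn_norm_le:
  assumes "q \<in> strong_nbhd \<nu> p t" and "0 < t"
  shows "pn_norm \<nu> (p - q) \<le> t"
  using assms unfolding strong_nbhd_def by (intro pn_norm_le) auto

context
  fixes \<nu> :: "'a::real_vector \<Rightarrow> ereal \<Rightarrow> real"
  assumes PN: "PN_space \<nu>"
begin

lemma PN_dist_distr: "dist_distr (\<nu> x)"
  using PN unfolding PN_space_def proper_dist_distr_def by blast

lemma PN_le_1: "\<nu> x z \<le> 1"
  using PN_dist_distr unfolding dist_distr_def by blast

lemma PN_nonneg: "0 \<le> \<nu> x z"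
  using PN_dist_distr unfolding dist_distr_def by blast

lemma PN_mono: "a \<le> b \<Longrightarrow> \<nu> x (ereal a) \<le> \<nu> x (ereal b)"
  using PN_dist_distr unfolding dist_distr_def by (simp add: monoD)

lemma PN_scaleR: "\<alpha> \<noteq> 0 \<Longrightarrow> 0 \<le> t \<Longrightarrow> \<nu> (\<alpha> *\<^sub>R x) (ereal t) = \<nu> x (ereal (t / \<bar>\<alpha>\<bar>))"
  using PN unfolding PN_space_def by blast

lemma pn_norm_set_nonempty: "{t. 0 < t \<and> 1 - t < \<nu> x (ereal t)} \<noteq> {}"
proof -
  have "2 \<in> {t. 0 < t \<and> 1 - t < \<nu> x (ereal t)}"
    using PN_nonneg[of x "ereal 2"] by simp
  then show ?thesis
    by blast
qed

lemma pn_norm_nonneg: "0 \<le> pn_norm \<nu> x"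
  unfolding pn_norm_def by (rule cInf_greatest[OF pn_norm_set_nonempty]) simp

lemma pn_norm_less_imp: "pn_norm \<nu> x < t \<Longrightarrow> 1 - t < \<nu> x (ereal t)"
proof -
  assume "pn_norm \<nu> x < t"
  then obtain s where "0 < s" "1 - s < \<nu> x (ereal s)" "s < t"
    using cInf_lessD[OF pn_norm_set_nonempty] unfolding pn_norm_def by blast
  then show ?thesis
    using PN_mono[of s t x] by simp
qed

lemma pn_norm_triangle: "pn_norm \<nu> (x + y) \<le> pn_norm \<nu> x + pn_norm \<nu> y"
proof (rule field_le_epsilon)
  fix e :: real assume "0 < e"
  define a b where "a = pn_norm \<nu> x + e / 2" and "b = pn_norm \<nu> y + e / 2"
  have "0 < a" "0 < b"
    using pn_norm_nonneg \<open>0 < e\<close> unfolding a_def b_def by (auto intro: add_nonneg_pos)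
  have "1 - a < \<nu> x (ereal a)" "1 - b < \<nu> y (ereal b)"
    using pn_norm_less_imp \<open>0 < e\<close> unfolding a_def b_def by auto
  moreover have "min (\<nu> x (ereal a)) (\<nu> y (ereal b)) \<le> tauM (\<nu> x) (\<nu> y) (a + b)"
    unfolding tauM_def using PN_le_1
    by (intro cSup_upper bdd_aboveI[where M = 1]) (auto simp: min_le_iff_disj)
  moreover have "tauM (\<nu> x) (\<nu> y) (a + b) \<le> \<nu> (x + y) (ereal (a + b))"
    using PN unfolding PN_space_def by blast
  ultimately have "1 - (a + b) < \<nu> (x + y) (ereal (a + b))"
    using \<open>0 < a\<close> \<open>0 < b\<close> by linarith
  then have "pn_norm \<nu> (x + y) \<le> a + b"
    using \<open>0 < a\<close> \<open>0 < b\<close> by (intro pn_norm_le) auto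
  then show "pn_norm \<nu> (x + y) \<le> pn_norm \<nu> x + pn_norm \<nu> y + e"
    unfolding a_def b_def by simp
qed

lemma pn_norm_zero: "pn_norm \<nu> 0 = 0"
proof -
  have "\<nu> 0 = H0"
    using PN unfolding PN_space_def by blast
  then have "pn_norm \<nu> 0 \<le> 0 + e" if "0 < e" for e
    using that by (intro pn_norm_le) (auto simp: H0_def)
  then have "pn_norm \<nu> 0 \<le> 0"
    by (rule field_le_epsilon)
  with pn_norm_nonneg[of 0] show ?thesis
    by simp
qed

lemma pn_norm_eq_0_imp_eq_1:
  assumes "pn_norm \<nu> x = 0" and "0 < r"
  shows "\<nu> x (ereal r) = 1"
proof (rule antisym[OF PN_le_1 field_le_epsilon])
  fix e :: real assume "0 < e"
  then have "1 - min e r < \<nu> x (ereal (min e r))"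
    using assms by (intro pn_norm_less_imp) auto
  moreover have "\<nu> x (ereal (min e r)) \<le> \<nu> x (ereal r)"
    by (rule PN_mono) simp
  ultimately show "1 \<le> \<nu> x (ereal r) + e"
    by linarith
qed

lemma pn_norm_eq_0_iff: "pn_norm \<nu> x = 0 \<longleftrightarrow> x = 0"
proof
  assume "pn_norm \<nu> x = 0"
  have "\<nu> x z = H0 z" for z
  proof (cases z)
    case (real r)
    have "\<nu> x (ereal r) \<le> \<nu> x (ereal 0)" if "r \<le> 0"
      using that by (rule PN_mono)
    moreover have "\<nu> x (ereal 0) = 0"
      using PN_dist_distr unfolding dist_distr_def zero_ereal_def by blast
    ultimately show ?thesis
      using real PN_nonneg[of x z] pn_norm_eq_0_imp_eq_1[OF \<open>pn_norm \<nu> x = 0\<close>, of r]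
      by (cases "r \<le> 0") (auto simp: H0_def)
  qed (use PN_dist_distr in \<open>auto simp: dist_distr_def H0_def\<close>)
  then show "x = 0"
    using PN unfolding PN_space_def by blast
qed (simp add: pn_norm_zero)

lemma pn_norm_scaleR_le:
  assumes "\<bar>c\<bar> \<le> 1"
  shows "pn_norm \<nu> (c *\<^sub>R x) \<le> pn_norm \<nu> x"
proof (cases "c = 0")
  case True
  then show ?thesis
    using pn_norm_nonneg by (simp add: pn_norm_zero)
next
  case False
  show ?thesis
    unfolding pn_norm_def[of \<nu> x]
  proof (rule cInf_greatest[OF pn_norm_set_nonempty])
    fix t assume t: "t \<in> {t. 0 < t \<and> 1 - t < \<nu> x (ereal t)}"
    then have "\<nu> x (ereal t) \<le> \<nu> x (ereal (t / \<bar>c\<bar>))"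
      using assms False by (intro PN_mono) (simp add: le_divide_eq)
    also have "\<dots> = \<nu> (c *\<^sub>R x) (ereal t)"
      using t False by (simp add: PN_scaleR)
    finally show "pn_norm \<nu> (c *\<^sub>R x) \<le> t"
      using t by (intro pn_norm_le) auto
  qed
qed

lemma pn_norm_absorbing:
  assumes "0 < r"
  shows "\<exists>n. pn_norm \<nu> (x /\<^sub>R real (Suc n)) < r"
proof -
  define s where "s = min r 1 / 2"
  have s: "0 < s" "s < r"
    using assms unfolding s_def by auto
  have "((\<lambda>t. \<nu> x (ereal t)) \<longlongrightarrow> 1) at_top"
    using PN unfolding PN_space_def proper_dist_distr_def by blast
  then have "\<forall>\<^sub>F t in at_top. 1 - s < \<nu> x (ereal t)"
    using s by (intro order_tendstoD(1)) auto
  then obtain K where K: "\<And>t. K \<le> t \<Longrightarrow> 1 - s < \<nu> x (ereal t)"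
    by (auto simp: eventually_at_top_linorder)
  obtain n :: nat where "K / s < n"
    using reals_Archimedean2 by blast
  then have "K \<le> s * real (Suc n)"
    using s by (simp add: divide_less_eq algebra_simps)
  then have "1 - s < \<nu> (x /\<^sub>R real (Suc n)) (ereal s)"
    using K s by (simp add: PN_scaleR divide_inverse del: of_nat_Suc)
  then have "pn_norm \<nu> (x /\<^sub>R real (Suc n)) \<le> s"
    using s by (intro pn_norm_le) auto
  with s show ?thesis
    by (intro exI[of _ n]) linarith
qed

lemma F_norm_pn_norm: "F_norm (pn_norm \<nu>)"
  by unfold_locales
    (simp_all add: pn_norm_nonneg pn_norm_eq_0_iff pn_norm_triangle pn_norm_scaleR_le
      pn_norm_absorbing del: of_nat_Suc)

lemma pn_norm_less_imp_strong_nbhd: "pn_norm \<nu> (p - q) < t \<Longrightarrow> q \<in> strong_nbhd \<nu> p t"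
  using pn_norm_less_imp unfolding strong_nbhd_def by simp

lemma strong_open_iff_openin:
  "strong_open \<nu> U \<longleftrightarrow> openin (Metric_space.mtopology UNIV (\<lambda>x y. pn_norm \<nu> (x - y))) U"
proof -
  interpret F_norm "pn_norm \<nu>"
    by (rule F_norm_pn_norm)
  have "(\<exists>t>0. strong_nbhd \<nu> p t \<subseteq> U) \<longleftrightarrow> (\<exists>r>0. mball p r \<subseteq> U)" for p
  proof
    assume "\<exists>t>0. strong_nbhd \<nu> p t \<subseteq> U"
    then show "\<exists>r>0. mball p r \<subseteq> U"
      using pn_norm_less_imp_strong_nbhd by fastforce
  next
    assume "\<exists>r>0. mball p r \<subseteq> U"
    then obtain r where "0 < r" "mball p r \<subseteq> U"
      by blast
    moreover have "strong_nbhd \<nu> p (r / 2) \<subseteq> mball p r"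
      using strong_nbhd_imp_pn_norm_le \<open>0 < r\<close> by fastforce
    ultimately show "\<exists>t>0. strong_nbhd \<nu> p t \<subseteq> U"
      by (intro exI[of _ "r / 2"]) auto
  qed
  then show ?thesis
    unfolding strong_open_def openin_mtopology by blast
qed

lemma strongly_complete_imp_mcomplete:
  assumes "strongly_complete \<nu>"
  shows "Metric_space.mcomplete UNIV (\<lambda>x y. pn_norm \<nu> (x - y))"
proof -
  interpret F_norm "pn_norm \<nu>"
    by (rule F_norm_pn_norm)
  show ?thesis
    unfolding mcomplete_def
  proof (intro allI impI)
    fix s assume "MCauchy s"
    have "strong_Cauchy \<nu> s"
      unfolding strong_Cauchy_def
    proof (intro allI impI)
      fix t :: real assume "0 < t"
      then obtain K where K: "\<And>n n'. K \<le> n \<Longrightarrow> K \<le> n' \<Longrightarrow> pn_norm \<nu> (s n - s n') < t"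
        using \<open>MCauchy s\<close> unfolding MCauchy_def by blast
      show "\<exists>K. \<forall>m>K. \<forall>n>K. 1 - t < \<nu> (s n - s m) (ereal t)"
        by (intro exI[of _ K] allI impI pn_norm_less_imp K) auto
    qed
    then obtain p where p: "strong_converges \<nu> s p"
      using assms unfolding strongly_complete_def by blast
    have "\<forall>\<^sub>F n in sequentially. pn_norm \<nu> (s n - p) < e" if "0 < e" for e
    proof -
      obtain K where K: "\<And>n. K \<le> n \<Longrightarrow> s n \<in> strong_nbhd \<nu> p (e / 2)"
        using p \<open>0 < e\<close> unfolding strong_converges_def by (meson half_gt_zero)
      have "pn_norm \<nu> (s n - p) < e" if "K \<le> n" for n
        using strong_nbhd_imp_pn_norm_le[OF K[OF that]] \<open>0 < e\<close> minus_commute[of p "s n"]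
        by simp
      then show ?thesis
        by (auto simp: eventually_sequentially)
    qed
    then show "\<exists>p. limitin mtopology s p sequentially"
      unfolding limitin_metric by auto
  qed
qed

end

lemma strongly_continuous_imp_continuous_at_0:
  assumes "PN_space \<nu>" and "PN_space \<mu>" and "linear T" and "strongly_continuous \<nu> \<mu> T"
  shows "\<forall>e>0. \<exists>d>0. \<forall>x. pn_norm \<nu> x < d \<longrightarrow> pn_norm \<mu> (T x) < e"
proof (intro allI impI)
  fix e :: real assume "0 < e"
  interpret W: F_norm "pn_norm \<mu>"
    by (rule F_norm_pn_norm[OF assms(2)])
  have "strong_open \<mu> (W.mball 0 e)"
    using strong_open_iff_openin[OF assms(2)] by simp
  then have "strong_open \<nu> (T -` W.mball 0 e)"
    using assms(4) unfolding strongly_continuous_def by blast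
  moreover have "0 \<in> T -` W.mball 0 e"
    using \<open>0 < e\<close> linear_0[OF assms(3)] by simp
  ultimately obtain d where "0 < d" and d: "strong_nbhd \<nu> 0 d \<subseteq> T -` W.mball 0 e"
    unfolding strong_open_def by blast
  have "pn_norm \<mu> (T x) < e" if "pn_norm \<nu> x < d" for x
    using pn_norm_less_imp_strong_nbhd[OF assms(1), of 0 x d] that d
      F_norm.minus[OF F_norm_pn_norm[OF assms(1)]] by auto
  with \<open>0 < d\<close> show "\<exists>d>0. \<forall>x. pn_norm \<nu> x < d \<longrightarrow> pn_norm \<mu> (T x) < e"
    by blast
qed

theorem theorem4p5:
  fixes \<nu> :: "'a::real_vector \<Rightarrow> ereal \<Rightarrow> real"
    and \<mu> :: "'b::real_vector \<Rightarrow> ereal \<Rightarrow> real"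
    and T :: "'a \<Rightarrow> 'b"
  assumes "PN_space \<nu>" and "PN_space \<mu>"
    and "strongly_complete \<nu>" and "strongly_complete \<mu>"
    and "linear T" and "strongly_continuous \<nu> \<mu> T"
    and "surj T"
  shows "\<forall>U. strong_open \<nu> U \<longrightarrow> strong_open \<mu> (T ` U)"
proof -
  interpret linear_F_norm_map "pn_norm \<nu>" "pn_norm \<mu>" T
    using F_norm_pn_norm[OF assms(1)] F_norm_pn_norm[OF assms(2)] assms(5)
    by (rule linear_F_norm_map.intro[OF _ _ linear_F_norm_map_axioms.intro])
  show ?thesis
    unfolding strong_open_iff_openin[OF assms(1)] strong_open_iff_openin[OF assms(2)]
    using open_mapping[OF strongly_complete_imp_mcomplete[OF assms(1,3)]
        strongly_complete_imp_mcomplete[OF assms(2,4)] assms(7)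
        strongly_continuous_imp_continuous_at_0[OF assms(1,2,5,6)]]
    by blast
qed

end
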